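(* The model (P) is feasible and has an optimal solution at an extreme point of its feasible region.
   Context: Model (P) is a multistage stochastic closed-loop EV battery recycling model. Index sets: zones $\mathcal{Z}$; time periods $t\in\mathcal{T}=\{1,\dots,T\}$; planning periods $l\in\mathcal{L}$, with $\mathcal{T}_l$ the periods of planning period $l$ and $l_t$ the planning period of $t$; stages $\sigma\in\mathcal{S}$ with $\sigma_t$ the stage of period $t$; scenario tree nodes $\Omega_\sigma$ at stage $\sigma$ with probabilities $p_\omega$, and $a_\omega(t)$ the ancestor of node $\omega$ at stage $\sigma_t$; battery chemistries $\mathcal{I}$; recycling processes $\mathcal{J}$; materials $\mathcal{K}$ with cathode powders $\mathcal{K}^{\text{CP}}\subset\mathcal{K}$; recycling facility indices $\mathcal{N}^{\text{REC}}_l$ and cathode production line indices $\mathcal{N}^{\text{CP}}_{l,k}$. Operational variables $x\ge 0$ are indexed by $(\omega,z,t,\cdot)$ with $\omega\in\Omega_{\sigma_t}$; capacity variables $y\ge0$ are $y^{\text{REC}}_{z,l,j,n}$ and $y^{\text{CP}}_{z,l,k,n}$. Constraints (all for $t\in\mathcal{T}$, $z\in\mathcal{Z}$, $\omega\in\Omega_{\sigma_t}$ unless stated): (Production) $\sum_{i} \Delta^{\text{NB}}_{i,k} d_{\omega,z,t,i} = x^{\text{NM,NB}}_{\omega,z,t,k} + x^{\text{INV,NB}}_{\omega,z,t,k}$ for $k\in\mathcal{K}^{\text{CP}}$; $\sum_{i} \Delta^{\text{NB}}_{i,k} d_{\omega,z,t,i} = x^{\text{NM,NB}}_{\omega,z,t,k}$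 for $k\in\mathcal{K}\setminus\mathcal{K}^{\text{CP}}$; $\sum_{k'\in\mathcal{K}^{\text{CP}}}\Delta^{\text{CP}}_{k',k}x^{\text{CP,INV}}_{\omega,z,t,k'} = x^{\text{NM,CP}}_{\omega,z,t,k}+x^{\text{MC,CP}}_{\omega,z,t,k}$ and $\sum_{k'\in\mathcal{K}\setminus\mathcal{K}^{\text{CP}}}\Delta^{\text{MC}}_{k',k}x^{\text{MC,CP}}_{\omega,z,t,k'} = x^{\text{INV,MC}}_{\omega,z,t,k}$ for $k\in\mathcal{K}\setminus\mathcal{K}^{\text{CP}}$; $x^{\text{RM,INV}}_{\omega,z,t,k}+x^{\text{RM,S}}_{\omega,z,t,k}=\sum_{i,j}\Delta^{\text{REC}}_{k,i,j}x^{\text{RB,RM}}_{\omega,z,t,i,j}$ for $k\in\mathcal{K}$. (Inventory balance) $x^{\text{RB}}_{\omega,z,0,i}=0$, $x^{\text{INV}}_{\omega,z,0,k}=0$; with $\omega'=a_\omega(t-1)$: $x^{\text{RB}}_{\omega,z,t,i}=x^{\text{RB}}_{\omega',z,t-1,i}+\sum_{z'\ne z}(x^{\text{TR,RB}}_{\omega,z',z,t,i}-x^{\text{TR,RB}}_{\omega,z,z',t,i})+s_{\omega,z,t,i}-\sum_j x^{\text{RB,RM}}_{\omega,z,t,i,j}$; for $k\in\mathcal{K}\setminus\mathcal{K}^{\text{CP}}$: $x^{\text{INV}}_{\omega,z,t,k}=x^{\text{INV}}_{\omega',z,t-1,k}+\sum_{z'\ne z}(x^{\text{TR,RM}}_{\omega,z',z,t,k}-x^{\text{TR,RM}}_{\omega,z,z',t,k})+x^{\text{RM,INV}}_{\omega,z,t,k}-x^{\text{INV,MC}}_{\omega,z,t,k}$;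 for $k\in\mathcal{K}^{\text{CP}}$: the same with $+x^{\text{RM,INV}}_{\omega,z,t,k}+x^{\text{CP,INV}}_{\omega,z,t,k}-x^{\text{INV,NB}}_{\omega,z,t,k}$ as the last terms. (Capacity) for $t\in\mathcal{T}_l$: $\sum_{n\in\mathcal{N}^{\text{REC}}_l}y^{\text{REC}}_{z,l,j,n}\ge\sum_i x^{\text{RB,RM}}_{\omega,z,t,i,j}$ and $\sum_{n\in\mathcal{N}^{\text{CP}}_{l,k}}y^{\text{CP}}_{z,l,k,n}\ge x^{\text{CP,INV}}_{\omega,z,t,k}$ ($k\in\mathcal{K}^{\text{CP}}$); total capacities $\sum_n y^{\text{REC}}_{z,l,j,n}$ and $\sum_n y^{\text{CP}}_{z,l,k,n}$ are nondecreasing in $l$; $y^{\text{REC}}_{z,l,j,n}\le u^{\text{REC}}$, $y^{\text{CP}}_{z,l,k,n}\le u^{\text{CP}}$. Objective: minimize $\sum_{t}(1-\gamma)^{t-1}\big(C^{\text{PL}}_t(y)+\sum_{\omega\in\Omega_{\sigma_t}}p_\omega C^{\text{OP}}_{\omega,t}(x)\big)$, where the linear operational cost is $C^{\text{OP}}_{\omega,t}(x)=\sum_z\big(\sum_{k}c^{\text{NB,NM}}_{\omega,t,k}x^{\text{NM,NB}}_{\omega,z,t,k}+\sum_{k\notin\mathcal{K}^{\text{CP}}}(c^{\text{CP,NM}}_{\omega,t,k}x^{\text{NM,CP}}_{\omega,z,t,k}+c^{\text{MC}}_{\omega,z,t,k}x^{\text{MC,CP}}_{\omega,z,t,k})+\sum_k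 v_{\omega,t,k}(\rho x^{\text{INV}}_{\omega,z,t,k}-\eta x^{\text{RM,S}}_{\omega,z,t,k})+\sum_{k\in\mathcal{K}^{\text{CP}}}c^{\text{CP}}_{\omega,z,t,k}x^{\text{CP,INV}}_{\omega,z,t,k}+\sum_{i,j}c^{\text{REC}}_{\omega,z,t,i,j}x^{\text{RB,RM}}_{\omega,z,t,i,j}+\sum_{z'\ne z}(\sum_k c^{\text{TR,RM}}_{z,z'}x^{\text{TR,RM}}_{\omega,z,z',t,k}+\sum_i c^{\text{TR,RB}}_{z,z'}x^{\text{TR,RB}}_{\omega,z,z',t,i})\big)$ with $\eta\le1$ and $\rho$ proportions, and the planning cost is $C^{\text{PL}}_t(y)=\sum_z\big(\sum_j\sum_{n\in\mathcal{N}^{\text{REC}}_{l_t}}f^{\text{REC}}_{z,j}(y^{\text{REC}}_{z,l_t,j,n})+\sum_{k\in\mathcal{K}^{\text{CP}}}\sum_{n\in\mathcal{N}^{\text{CP}}_{l_t,k}}f^{\text{CP}}_{z,k}(y^{\text{CP}}_{z,l_t,k,n})\big)$, with each $f(y)=\sum_i q_iy^{r_i}+w$ for $y>0$, $f(0)=0$, $r_i\in(0,1]$, $q_i,w\ge0$. Thus (P) is a separable concave minimization over a polyhedron in the nonnegative orthant. Assumption: the parameters $d,s,c,v,p,\Delta$ are nonnegative, $u^{\text{REC}},u^{\text{CP}}$ are positive, $\gamma\in[0,1)$, and the functions $f$ are concave, monotonic increasing, with $f(0)=0$. *)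

theory Defs
  imports "HOL-Analysis.Analysis"
begin

text \<open>Zones, chemistries, processes and materials are finite types 'z, 'i, 'j, 'k
  (the material set K is the whole type 'k, cathode powders K^CP are the set KCP).\<close>

record ('w, 'z, 'i, 'j, 'k) rcmodel =
  horizon :: nat                          \<comment> \<open>T; periods are 1..T\<close>
  stage :: "nat \<Rightarrow> nat"
  nodes :: "nat \<Rightarrow> 'w set"
  anc :: "'w \<Rightarrow> nat \<Rightarrow> 'w"
  prob :: "'w \<Rightarrow> real"
  Lset :: "nat set"
  lper :: "nat \<Rightarrow> nat"
  NREC :: "nat \<Rightarrow> nat set"
  NCP :: "nat \<Rightarrow> 'k \<Rightarrow> nat set"
  KCP :: "'k set"
  dem :: "'w \<Rightarrow> 'z \<Rightarrow> nat \<Rightarrow> 'i \<Rightarrow> real"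
  supp :: "'w \<Rightarrow> 'z \<Rightarrow> nat \<Rightarrow> 'i \<Rightarrow> real"
  DNB :: "'i \<Rightarrow> 'k \<Rightarrow> real"
  DCP :: "'k \<Rightarrow> 'k \<Rightarrow> real"
  DMC :: "'k \<Rightarrow> 'k \<Rightarrow> real"
  DREC :: "'k \<Rightarrow> 'i \<Rightarrow> 'j \<Rightarrow> real"
  cNBNM :: "'w \<Rightarrow> nat \<Rightarrow> 'k \<Rightarrow> real"
  cCPNM :: "'w \<Rightarrow> nat \<Rightarrow> 'k \<Rightarrow> real"
  cMC :: "'w \<Rightarrow> 'z \<Rightarrow> nat \<Rightarrow> 'k \<Rightarrow> real"
  cCP :: "'w \<Rightarrow> 'z \<Rightarrow> nat \<Rightarrow> 'k \<Rightarrow> real"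
  val :: "'w \<Rightarrow> nat \<Rightarrow> 'k \<Rightarrow> real"
  cREC :: "'w \<Rightarrow> 'z \<Rightarrow> nat \<Rightarrow> 'i \<Rightarrow> 'j \<Rightarrow> real"
  cTRRM :: "'z \<Rightarrow> 'z \<Rightarrow> real"
  cTRRB :: "'z \<Rightarrow> 'z \<Rightarrow> real"
  rho :: real
  eta :: real
  gamma :: real
  uREC :: real
  uCP :: real
  \<comment> \<open>f^REC_{z,j}(y) = sum_{i<mREC z j} qREC z j i * y^(rREC z j i) + wREC z j for y > 0\<close>
  qREC :: "'z \<Rightarrow> 'j \<Rightarrow> nat \<Rightarrow> real"
  rREC :: "'z \<Rightarrow> 'j \<Rightarrow> nat \<Rightarrow> real"
  mREC :: "'z \<Rightarrow> 'j \<Rightarrow> nat"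
  wREC :: "'z \<Rightarrow> 'j \<Rightarrow> real"
  qCP :: "'z \<Rightarrow> 'k \<Rightarrow> nat \<Rightarrow> real"
  rCP :: "'z \<Rightarrow> 'k \<Rightarrow> nat \<Rightarrow> real"
  mCP :: "'z \<Rightarrow> 'k \<Rightarrow> nat"
  wCP :: "'z \<Rightarrow> 'k \<Rightarrow> real"

datatype ('w, 'z, 'i, 'j, 'k) rcvar =
    XNMNB 'w 'z nat 'k | XINVNB 'w 'z nat 'k | XCPINV 'w 'z nat 'k
  | XNMCP 'w 'z nat 'k | XMCCP 'w 'z nat 'k | XINVMC 'w 'z nat 'k
  | XRMINV 'w 'z nat 'k | XRMS 'w 'z nat 'k | XINV 'w 'z nat 'k
  | XRB 'w 'z nat 'i | XRBRM 'w 'z nat 'i 'j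
  | XTRRB 'w 'z 'z nat 'i | XTRRM 'w 'z 'z nat 'k
  | YREC 'z nat 'j nat | YCP 'z nat 'k nat

type_synonym ('w, 'z, 'i, 'j, 'k) rcpoint = "('w, 'z, 'i, 'j, 'k) rcvar \<Rightarrow> real"

definition periods :: "('w, 'z, 'i, 'j, 'k) rcmodel \<Rightarrow> nat set" where
  "periods M = {1..horizon M}"

definition node_ok :: "('w, 'z, 'i, 'j, 'k) rcmodel \<Rightarrow> 'w \<Rightarrow> nat \<Rightarrow> bool" where
  "node_ok M w t \<longleftrightarrow> t \<in> periods M \<and> w \<in> nodes M (stage M t)"

fun valid_var :: "('w, 'z, 'i, 'j, 'k) rcmodel \<Rightarrow> ('w, 'z, 'i, 'j, 'k) rcvar \<Rightarrow> bool" where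
  "valid_var M (XNMNB w z t k) = node_ok M w t"
| "valid_var M (XINVNB w z t k) = (node_ok M w t \<and> k \<in> KCP M)"
| "valid_var M (XCPINV w z t k) = (node_ok M w t \<and> k \<in> KCP M)"
| "valid_var M (XNMCP w z t k) = (node_ok M w t \<and> k \<notin> KCP M)"
| "valid_var M (XMCCP w z t k) = (node_ok M w t \<and> k \<notin> KCP M)"
| "valid_var M (XINVMC w z t k) = (node_ok M w t \<and> k \<notin> KCP M)"
| "valid_var M (XRMINV w z t k) = node_ok M w t"
| "valid_var M (XRMS w z t k) = node_ok M w t"
| "valid_var M (XINV w z t k) = node_ok M w t"
| "valid_var M (XRB w z t i) = node_ok M w t"
| "valid_var M (XRBRM w z t i j) = node_ok M w t"
| "valid_var M (XTRRB w z z' t i) = (node_ok M w t \<and> z \<noteq> z')"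
| "valid_var M (XTRRM w z z' t k) = (node_ok M w t \<and> z \<noteq> z')"
| "valid_var M (YREC z l j n) = (l \<in> Lset M \<and> n \<in> NREC M l)"
| "valid_var M (YCP z l k n) = (l \<in> Lset M \<and> k \<in> KCP M \<and> n \<in> NCP M l k)"

definition prevRB :: "('w, 'z, 'i, 'j, 'k) rcmodel \<Rightarrow> ('w, 'z, 'i, 'j, 'k) rcpoint
    \<Rightarrow> 'w \<Rightarrow> 'z \<Rightarrow> nat \<Rightarrow> 'i \<Rightarrow> real" where
  "prevRB M x w z t i = (if t = 1 then 0 else x (XRB (anc M w (t - 1)) z (t - 1) i))"

definition prevINV :: "('w, 'z, 'i, 'j, 'k) rcmodel \<Rightarrow> ('w, 'z, 'i, 'j, 'k) rcpoint
    \<Rightarrow> 'w \<Rightarrow> 'z \<Rightarrow> nat \<Rightarrow> 'k \<Rightarrow> real" where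
  "prevINV M x w z t k = (if t = 1 then 0 else x (XINV (anc M w (t - 1)) z (t - 1) k))"

definition capREC :: "('w, 'z, 'i, 'j, 'k) rcmodel \<Rightarrow> ('w, 'z, 'i, 'j, 'k) rcpoint
    \<Rightarrow> 'z \<Rightarrow> nat \<Rightarrow> 'j \<Rightarrow> real" where
  "capREC M x z l j = (\<Sum>n\<in>NREC M l. x (YREC z l j n))"

definition capCP :: "('w, 'z, 'i, 'j, 'k) rcmodel \<Rightarrow> ('w, 'z, 'i, 'j, 'k) rcpoint
    \<Rightarrow> 'z \<Rightarrow> nat \<Rightarrow> 'k \<Rightarrow> real" where
  "capCP M x z l k = (\<Sum>n\<in>NCP M l k. x (YCP z l k n))"

definition feasible :: "('w, 'z::finite, 'i::finite, 'j::finite, 'k::finite) rcmodel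
    \<Rightarrow> ('w, 'z, 'i, 'j, 'k) rcpoint \<Rightarrow> bool" where
  "feasible M x \<longleftrightarrow>
     \<comment> \<open>variables exist only on the index set of (P); all are nonnegative\<close>
     (\<forall>v. \<not> valid_var M v \<longrightarrow> x v = 0) \<and>
     (\<forall>v. valid_var M v \<longrightarrow> 0 \<le> x v) \<and>
     (\<forall>t\<in>periods M. \<forall>w\<in>nodes M (stage M t). \<forall>z.
        \<comment> \<open>production\<close>
        (\<forall>k\<in>KCP M. (\<Sum>i\<in>UNIV. DNB M i k * dem M w z t i)
                      = x (XNMNB w z t k) + x (XINVNB w z t k)) \<and>
        (\<forall>k. k \<notin> KCP M \<longrightarrow> (\<Sum>i\<in>UNIV. DNB M i k * dem M w z t i) = x (XNMNB w z t k)) \<and>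
        (\<forall>k. k \<notin> KCP M \<longrightarrow> (\<Sum>k'\<in>KCP M. DCP M k' k * x (XCPINV w z t k'))
                      = x (XNMCP w z t k) + x (XMCCP w z t k)) \<and>
        (\<forall>k. k \<notin> KCP M \<longrightarrow> (\<Sum>k'\<in>- KCP M. DMC M k' k * x (XMCCP w z t k'))
                      = x (XINVMC w z t k)) \<and>
        (\<forall>k. x (XRMINV w z t k) + x (XRMS w z t k)
                = (\<Sum>i\<in>UNIV. \<Sum>j\<in>UNIV. DREC M k i j * x (XRBRM w z t i j))) \<and>
        \<comment> \<open>inventory balance\<close>
        (\<forall>i. x (XRB w z t i) = prevRB M x w z t i
              + (\<Sum>z'\<in>- {z}. x (XTRRB w z' z t i) - x (XTRRB w z z' t i))
              + supp M w z t i - (\<Sum>j\<in>UNIV. x (XRBRM w z t i j))) \<and>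
        (\<forall>k. k \<notin> KCP M \<longrightarrow> x (XINV w z t k) = prevINV M x w z t k
              + (\<Sum>z'\<in>- {z}. x (XTRRM w z' z t k) - x (XTRRM w z z' t k))
              + x (XRMINV w z t k) - x (XINVMC w z t k)) \<and>
        (\<forall>k\<in>KCP M. x (XINV w z t k) = prevINV M x w z t k
              + (\<Sum>z'\<in>- {z}. x (XTRRM w z' z t k) - x (XTRRM w z z' t k))
              + x (XRMINV w z t k) + x (XCPINV w z t k) - x (XINVNB w z t k)) \<and>
        \<comment> \<open>capacity (t belongs to planning period l_t)\<close>
        (\<forall>j. capREC M x z (lper M t) j \<ge> (\<Sum>i\<in>UNIV. x (XRBRM w z t i j))) \<and>
        (\<forall>k\<in>KCP M. capCP M x z (lper M t) k \<ge> x (XCPINV w z t k))) \<and>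
     \<comment> \<open>total capacities nondecreasing in l\<close>
     (\<forall>z. \<forall>l\<in>Lset M. \<forall>l'\<in>Lset M. l \<le> l' \<longrightarrow>
        (\<forall>j. capREC M x z l j \<le> capREC M x z l' j) \<and>
        (\<forall>k\<in>KCP M. capCP M x z l k \<le> capCP M x z l' k)) \<and>
     \<comment> \<open>capacity upper bounds\<close>
     (\<forall>z l j n. x (YREC z l j n) \<le> uREC M) \<and>
     (\<forall>z l k n. x (YCP z l k n) \<le> uCP M)"

definition feasible_region :: "('w, 'z::finite, 'i::finite, 'j::finite, 'k::finite) rcmodel
    \<Rightarrow> ('w, 'z, 'i, 'j, 'k) rcpoint set" where
  "feasible_region M = {x. feasible M x}"

definition capcost :: "(nat \<Rightarrow> real) \<Rightarrow> (nat \<Rightarrow> real) \<Rightarrow> nat \<Rightarrow> real \<Rightarrow> real \<Rightarrow> real" where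
  "capcost q r m w y = (if y > 0 then (\<Sum>i<m. q i * y powr r i) + w else 0)"

definition fREC :: "('w, 'z, 'i, 'j, 'k) rcmodel \<Rightarrow> 'z \<Rightarrow> 'j \<Rightarrow> real \<Rightarrow> real" where
  "fREC M z j = capcost (qREC M z j) (rREC M z j) (mREC M z j) (wREC M z j)"

definition fCP :: "('w, 'z, 'i, 'j, 'k) rcmodel \<Rightarrow> 'z \<Rightarrow> 'k \<Rightarrow> real \<Rightarrow> real" where
  "fCP M z k = capcost (qCP M z k) (rCP M z k) (mCP M z k) (wCP M z k)"

definition CPL :: "('w, 'z::finite, 'i::finite, 'j::finite, 'k::finite) rcmodel
    \<Rightarrow> ('w, 'z, 'i, 'j, 'k) rcpoint \<Rightarrow> nat \<Rightarrow> real" where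
  "CPL M x t = (\<Sum>z\<in>UNIV.
      (\<Sum>j\<in>UNIV. \<Sum>n\<in>NREC M (lper M t). fREC M z j (x (YREC z (lper M t) j n)))
    + (\<Sum>k\<in>KCP M. \<Sum>n\<in>NCP M (lper M t) k. fCP M z k (x (YCP z (lper M t) k n))))"

definition COP :: "('w, 'z::finite, 'i::finite, 'j::finite, 'k::finite) rcmodel
    \<Rightarrow> ('w, 'z, 'i, 'j, 'k) rcpoint \<Rightarrow> 'w \<Rightarrow> nat \<Rightarrow> real" where
  "COP M x w t = (\<Sum>z\<in>UNIV.
      (\<Sum>k\<in>UNIV. cNBNM M w t k * x (XNMNB w z t k))
    + (\<Sum>k\<in>- KCP M. cCPNM M w t k * x (XNMCP w z t k) + cMC M w z t k * x (XMCCP w z t k))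
    + (\<Sum>k\<in>UNIV. val M w t k * (rho M * x (XINV w z t k) - eta M * x (XRMS w z t k)))
    + (\<Sum>k\<in>KCP M. cCP M w z t k * x (XCPINV w z t k))
    + (\<Sum>i\<in>UNIV. \<Sum>j\<in>UNIV. cREC M w z t i j * x (XRBRM w z t i j))
    + (\<Sum>z'\<in>- {z}. (\<Sum>k\<in>UNIV. cTRRM M z z' * x (XTRRM w z z' t k))
                    + (\<Sum>i\<in>UNIV. cTRRB M z z' * x (XTRRB w z z' t i))))"

definition objective :: "('w, 'z::finite, 'i::finite, 'j::finite, 'k::finite) rcmodel
    \<Rightarrow> ('w, 'z, 'i, 'j, 'k) rcpoint \<Rightarrow> real" where
  "objective M x = (\<Sum>t\<in>periods M. (1 - gamma M) ^ (t - 1) *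
      (CPL M x t + (\<Sum>w\<in>nodes M (stage M t). prob M w * COP M x w t)))"

text \<open>The library notion extreme_point_of needs a real_vector type; the space of
  functions rcvar => real carries no such instance, so we write out its definition
  (x in S and x lies in no open segment between two distinct points of S) with
  pointwise convex combinations.\<close>
definition fun_extreme_point_of :: "('a \<Rightarrow> real) \<Rightarrow> ('a \<Rightarrow> real) set \<Rightarrow> bool" where
  "fun_extreme_point_of x S \<longleftrightarrow> x \<in> S \<and>
     \<not> (\<exists>a\<in>S. \<exists>b\<in>S. \<exists>u. a \<noteq> b \<and> 0 < u \<and> u < 1 \<and> x = (\<lambda>v. (1 - u) * a v + u * b v))"

end

theory Submission
  imports Defs
begin

text \<open>The feasible region of (P) is cut out of the space of plans by affine equalities and
  finitely many affine inequalities: only finitely many variables are free, the others are fixed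
  to \<open>0\<close>. As every free variable is nonnegative, the region contains no line. The objective is
  concave (the capacity costs are concave powers with an upward jump at \<open>0\<close>) and bounded below
  (its only negative term, the revenue from sold material, is bounded by the recycling capacity).
  Through a non-extreme feasible point passes a line along which one can move, without increasing
  the objective, to a feasible point with strictly more active inequalities; so every feasible
  point is dominated by an extreme point. Extreme points are determined by their active sets, hence
  finitely many, and the best of them is optimal. A feasible plan meets all demand with new material
  and stores every returned battery.\<close>

section \<open>Affine and concave functionals on real-valued functions\<close>

definition affine_comb :: "('v \<Rightarrow> real) \<Rightarrow> ('v \<Rightarrow> real) \<Rightarrow> real \<Rightarrow> 'v \<Rightarrow> real" where
  "affine_comb a b u = (\<lambda>v. (1 - u) * a v + u * b v)"

lemma affine_comb_0 [simp]: "affine_comb a b 0 = a"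
  and affine_comb_1 [simp]: "affine_comb a b 1 = b"
  by (auto simp: affine_comb_def)

lemma affine_comb_swap: "affine_comb b a (1 - u) = affine_comb a b u"
  by (rule ext) (simp add: affine_comb_def algebra_simps)

lemma affine_comb_affine_comb:
  "affine_comb (affine_comb a b p) (affine_comb a b q) t = affine_comb a b ((1 - t) * p + t * q)"
  by (rule ext) (simp add: affine_comb_def algebra_simps)

lemma affine_comb_eq_left_iff: "affine_comb a b u = a \<longleftrightarrow> u = 0 \<or> a = b"
proof
  assume eq: "affine_comb a b u = a"
  have "u * (b v - a v) = 0" for v
    using fun_cong[OF eq, of v] by (simp add: affine_comb_def algebra_simps)
  then show "u = 0 \<or> a = b" by auto
qed (auto simp: affine_comb_def algebra_simps)

definition affine_fun :: "(('v \<Rightarrow> real) \<Rightarrow> real) \<Rightarrow> bool" where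
  "affine_fun g \<longleftrightarrow> (\<forall>a b u. g (affine_comb a b u) = (1 - u) * g a + u * g b)"

lemma affine_fun_line: "affine_fun g \<Longrightarrow> g (affine_comb a b s) = g a + s * (g b - g a)"
  by (simp add: affine_fun_def algebra_simps)

lemma affine_fun_var: "affine_fun (\<lambda>x. x v)"
  by (simp add: affine_fun_def affine_comb_def)

lemma affine_fun_const: "affine_fun (\<lambda>x. c)"
  by (simp add: affine_fun_def algebra_simps)

lemma affine_fun_add: "affine_fun g \<Longrightarrow> affine_fun h \<Longrightarrow> affine_fun (\<lambda>x. g x + h x)"
  and affine_fun_diff: "affine_fun g \<Longrightarrow> affine_fun h \<Longrightarrow> affine_fun (\<lambda>x. g x - h x)"
  and affine_fun_cmult: "affine_fun g \<Longrightarrow> affine_fun (\<lambda>x. c * g x)"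
  and affine_fun_uminus: "affine_fun g \<Longrightarrow> affine_fun (\<lambda>x. - g x)"
  and affine_fun_if: "affine_fun g \<Longrightarrow> affine_fun h \<Longrightarrow> affine_fun (\<lambda>x. if Q then g x else h x)"
  by (simp_all add: affine_fun_def) (simp_all add: algebra_simps)

lemma affine_fun_sum:
  assumes "\<And>i. i \<in> A \<Longrightarrow> affine_fun (g i)"
  shows "affine_fun (\<lambda>x. \<Sum>i\<in>A. g i x)"
  unfolding affine_fun_def
proof (intro allI)
  fix a b u
  have "(\<Sum>i\<in>A. g i (affine_comb a b u)) = (\<Sum>i\<in>A. (1 - u) * g i a + u * g i b)"
    using assms by (intro sum.cong) (auto simp: affine_fun_def)
  then show "(\<Sum>i\<in>A. g i (affine_comb a b u)) = (1 - u) * (\<Sum>i\<in>A. g i a) + u * (\<Sum>i\<in>A. g i b)"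
    by (simp add: sum.distrib sum_distrib_left)
qed

lemmas affine_fun_intros =
  affine_fun_var affine_fun_const affine_fun_add affine_fun_diff affine_fun_cmult affine_fun_uminus
  affine_fun_if affine_fun_sum

definition concave_fun_on :: "('v \<Rightarrow> real) set \<Rightarrow> (('v \<Rightarrow> real) \<Rightarrow> real) \<Rightarrow> bool" where
  "concave_fun_on S f \<longleftrightarrow> (\<forall>a\<in>S. \<forall>b\<in>S. \<forall>u. 0 \<le> u \<longrightarrow> u \<le> 1 \<longrightarrow>
      (1 - u) * f a + u * f b \<le> f (affine_comb a b u))"

lemma concave_fun_onD:
  "concave_fun_on S f \<Longrightarrow> a \<in> S \<Longrightarrow> b \<in> S \<Longrightarrow> 0 \<le> u \<Longrightarrow> u \<le> 1 \<Longrightarrow>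
    (1 - u) * f a + u * f b \<le> f (affine_comb a b u)"
  by (simp add: concave_fun_on_def)

lemma concave_fun_on_affine: "affine_fun g \<Longrightarrow> concave_fun_on S g"
  by (simp add: concave_fun_on_def affine_fun_def)

lemma concave_fun_on_add:
  "concave_fun_on S f \<Longrightarrow> concave_fun_on S g \<Longrightarrow> concave_fun_on S (\<lambda>x. f x + g x)"
  unfolding concave_fun_on_def by (smt (verit, best) distrib_left)

lemma concave_fun_on_cmult:
  assumes "0 \<le> c" "concave_fun_on S f"
  shows "concave_fun_on S (\<lambda>x. c * f x)"
  unfolding concave_fun_on_def
proof (intro ballI allI impI)
  fix a b u assume "a \<in> S" "b \<in> S" "0 \<le> u" "u \<le> (1::real)"
  then have "c * ((1 - u) * f a + u * f b) \<le> c * f (affine_comb a b u)"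
    using assms by (intro mult_left_mono concave_fun_onD) auto
  then show "(1 - u) * (c * f a) + u * (c * f b) \<le> c * f (affine_comb a b u)"
    by (simp add: algebra_simps)
qed

lemma concave_fun_on_sum:
  assumes "\<And>i. i \<in> A \<Longrightarrow> concave_fun_on S (g i)"
  shows "concave_fun_on S (\<lambda>x. \<Sum>i\<in>A. g i x)"
  unfolding concave_fun_on_def
proof (intro ballI allI impI)
  fix a b u assume "a \<in> S" "b \<in> S" "0 \<le> u" "u \<le> (1::real)"
  then have "(\<Sum>i\<in>A. (1 - u) * g i a + u * g i b) \<le> (\<Sum>i\<in>A. g i (affine_comb a b u))"
    using assms by (intro sum_mono concave_fun_onD) auto
  then show "(1 - u) * (\<Sum>i\<in>A. g i a) + u * (\<Sum>i\<in>A. g i b) \<le> (\<Sum>i\<in>A. g i (affine_comb a b u))"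
    by (simp add: sum.distrib sum_distrib_left)
qed

lemma concave_on_line:
  assumes f: "concave_fun_on S f" and I: "convex I" "\<And>s. s \<in> I \<Longrightarrow> affine_comb a b s \<in> S"
  shows "concave_on I (\<lambda>s. f (affine_comb a b s))"
  unfolding concave_on_iff
proof (intro conjI ballI allI impI)
  fix p q u v :: real assume pq: "p \<in> I" "q \<in> I" and uv: "0 \<le> u" "0 \<le> v" "u + v = 1"
  then have u: "u = 1 - v" by simp
  have "u * f (affine_comb a b p) + v * f (affine_comb a b q)
      \<le> f (affine_comb (affine_comb a b p) (affine_comb a b q) v)"
    unfolding u using concave_fun_onD[OF f I(2) I(2), of p q v] pq uv by simp
  also have "\<dots> = f (affine_comb a b (u *\<^sub>R p + v *\<^sub>R q))"
    unfolding u by (simp add: affine_comb_affine_comb)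
  finally show "u * f (affine_comb a b p) + v * f (affine_comb a b q)
      \<le> f (affine_comb a b (u *\<^sub>R p + v *\<^sub>R q))" .
qed (fact I(1))

text \<open>Were \<open>\<phi> c > \<phi> u\<close>, concavity would force \<open>\<phi>\<close> to decrease at least linearly to the left of \<open>u\<close>.\<close>
lemma concave_on_atMost_bounded_below_antimono:
  fixes \<phi> :: "real \<Rightarrow> real"
  assumes conc: "concave_on {..c} \<phi>" and bdd: "\<And>s. s \<le> c \<Longrightarrow> B \<le> \<phi> s" and u: "u < c"
  shows "\<phi> c \<le> \<phi> u"
proof (rule ccontr)
  assume "\<not> \<phi> c \<le> \<phi> u"
  then have \<Delta>: "0 < \<phi> c - \<phi> u" by simp
  define K where "K = (\<bar>\<phi> u - B\<bar> + 1) / (\<phi> c - \<phi> u)"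
  define s where "s = u - K * (c - u)"
  define t where "t = K / (K + 1)"
  have K: "0 < K" using \<Delta> by (simp add: K_def)
  have t: "0 \<le> t" "t \<le> 1" using K by (simp_all add: t_def)
  have "0 \<le> K * (c - u)" using K u by simp
  then have "s \<le> c" using u by (simp add: s_def)
  have "1 - t = 1 / (K + 1)" using K by (simp add: t_def field_simps)
  then have comb: "(1 - t) * p + t * q = (p + K * q) / (K + 1)" for p q
    by (simp add: t_def add_divide_distrib)
  have "s + K * c = (K + 1) * u" by (simp add: s_def algebra_simps)
  then have "(1 - t) * s + t * c = u" using K by (simp add: comb)
  then have "(\<phi> s + K * \<phi> c) / (K + 1) \<le> \<phi> u"
    using concave_onD[OF conc t, of s c] \<open>s \<le> c\<close> by (simp add: comb)
  then have "\<phi> s + K * \<phi> c \<le> (K + 1) * \<phi> u"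
    using K by (simp add: pos_divide_le_eq mult.commute)
  then have "\<phi> s \<le> \<phi> u - K * (\<phi> c - \<phi> u)" by (simp add: algebra_simps)
  also have "\<dots> < B" using \<Delta> by (simp add: K_def)
  finally show False using bdd \<open>s \<le> c\<close> by force
qed

section \<open>Concave minimization over a pointed polyhedron\<close>

lemma fun_extreme_point_of_iff:
  "fun_extreme_point_of x S \<longleftrightarrow> x \<in> S \<and>
     \<not> (\<exists>a\<in>S. \<exists>b\<in>S. \<exists>u. a \<noteq> b \<and> 0 < u \<and> u < 1 \<and> x = affine_comb a b u)"
  by (simp add: fun_extreme_point_of_def affine_comb_def)

definition fun_polyhedron :: "(('v \<Rightarrow> real) \<Rightarrow> real) set \<Rightarrow> (('v \<Rightarrow> real) \<Rightarrow> real) set \<Rightarrow> ('v \<Rightarrow> real) set"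
  where "fun_polyhedron E C = {x. (\<forall>g\<in>E. g x = 0) \<and> (\<forall>g\<in>C. g x \<le> 0)}"

locale pointed_polyhedron =
  fixes E C :: "(('v \<Rightarrow> real) \<Rightarrow> real) set"
  assumes finite_C: "finite C"
    and affine_E: "\<And>g. g \<in> E \<Longrightarrow> affine_fun g"
    and affine_C: "\<And>g. g \<in> C \<Longrightarrow> affine_fun g"
    and pointed: "\<And>a b. a \<in> fun_polyhedron E C \<Longrightarrow> b \<in> fun_polyhedron E C \<Longrightarrow> a \<noteq> b \<Longrightarrow> \<exists>g\<in>C. g a \<noteq> g b"
begin

abbreviation P :: "('v \<Rightarrow> real) set" where "P \<equiv> fun_polyhedron E C"

definition active :: "('v \<Rightarrow> real) \<Rightarrow> (('v \<Rightarrow> real) \<Rightarrow> real) set" where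
  "active x = {g\<in>C. g x = 0}"

lemma polyhedron_le: "x \<in> P \<Longrightarrow> g \<in> C \<Longrightarrow> g x \<le> 0"
  by (simp add: fun_polyhedron_def)

lemma line_in_polyhedron:
  assumes "a \<in> P" "b \<in> P" "\<And>g. g \<in> C \<Longrightarrow> g (affine_comb a b s) \<le> 0"
  shows "affine_comb a b s \<in> P"
  unfolding fun_polyhedron_def
proof (intro CollectI conjI ballI)
  fix g assume "g \<in> E"
  then show "g (affine_comb a b s) = 0"
    using assms(1,2) affine_fun_line[OF affine_E, of g a b s] by (auto simp: fun_polyhedron_def)
qed (fact assms(3))

lemma polyhedron_convex:
  assumes "a \<in> P" "b \<in> P" "0 \<le> t" "t \<le> 1"
  shows "affine_comb a b t \<in> P"
proof (rule line_in_polyhedron[OF assms(1,2)])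
  fix g assume g: "g \<in> C"
  have "(1 - t) * g a \<le> 0" "t * g b \<le> 0"
    using assms polyhedron_le[OF _ g] by (auto simp: mult_nonneg_nonpos)
  then show "g (affine_comb a b t) \<le> 0"
    using affine_C[OF g] by (simp add: affine_fun_def)
qed

lemma line_segment_in_polyhedron:
  assumes "affine_comb a b p \<in> P" "affine_comb a b q \<in> P" "p \<le> s" "s \<le> q"
  shows "affine_comb a b s \<in> P"
proof (cases "p = q")
  case False
  define t where "t = (s - p) / (q - p)"
  have "t * (q - p) = s - p" using False by (simp add: t_def)
  then have s: "(1 - t) * p + t * q = s" by (simp add: algebra_simps)
  have "0 \<le> t" "t \<le> 1" using assms False by (auto simp: t_def field_simps)
  then have "affine_comb (affine_comb a b p) (affine_comb a b q) t \<in> P"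
    by (rule polyhedron_convex[OF assms(1,2)])
  then show ?thesis by (simp only: affine_comb_affine_comb s)
qed (use assms in simp)

lemma line_forward_in_polyhedron:
  assumes a: "a \<in> P" and b: "b \<in> P" and "0 \<le> s"
    and incr: "\<And>g. g \<in> C \<Longrightarrow> g a < g b \<Longrightarrow> g (affine_comb a b s) \<le> 0"
  shows "affine_comb a b s \<in> P"
proof (rule line_in_polyhedron[OF a b])
  fix g assume g: "g \<in> C"
  show "g (affine_comb a b s) \<le> 0"
  proof (cases "g a < g b")
    case False
    then have "s * (g b - g a) \<le> 0" using \<open>0 \<le> s\<close> by (simp add: mult_nonneg_nonpos)
    then show ?thesis using polyhedron_le[OF a g] affine_fun_line[OF affine_C[OF g]] by simp
  qed (use incr g in blast)
qed

lemma line_ray_in_polyhedron: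
  assumes a: "a \<in> P" and b: "b \<in> P" and c: "affine_comb a b c \<in> P"
    and incr: "\<forall>g\<in>C. g a \<le> g b" and "s \<le> c"
  shows "affine_comb a b s \<in> P"
proof (rule line_in_polyhedron[OF a b])
  fix g assume g: "g \<in> C"
  have "s * (g b - g a) \<le> c * (g b - g a)" using incr g \<open>s \<le> c\<close> by (intro mult_right_mono) auto
  then show "g (affine_comb a b s) \<le> 0"
    using polyhedron_le[OF c g] affine_fun_line[OF affine_C[OF g]] by simp
qed

lemma active_inter_subset_line: "active a \<inter> active b \<subseteq> active (affine_comb a b s)"
proof
  fix g assume "g \<in> active a \<inter> active b"
  then show "g \<in> active (affine_comb a b s)"
    using affine_fun_line[OF affine_C, of g a b s] by (simp add: active_def)
qed

lemma active_affine_comb: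
  assumes a: "a \<in> P" and b: "b \<in> P" and u: "0 < u" "u < 1"
  shows "active (affine_comb a b u) = active a \<inter> active b"
proof (intro equalityI subsetI)
  fix g assume "g \<in> active (affine_comb a b u)"
  then have g: "g \<in> C" "g (affine_comb a b u) = 0" by (auto simp: active_def)
  then have "(1 - u) * g a + u * g b = 0" using affine_C[OF g(1)] by (simp add: affine_fun_def)
  moreover have "(1 - u) * g a \<le> 0" "u * g b \<le> 0"
    using u polyhedron_le[OF a g(1)] polyhedron_le[OF b g(1)] by (auto simp: mult_nonneg_nonpos)
  ultimately have "(1 - u) * g a = 0" "u * g b = 0" by linarith+
  then show "g \<in> active a \<inter> active b" using g u by (auto simp: active_def)
qed (use active_inter_subset_line in blast)

text \<open>Walking from \<open>a\<close> towards \<open>b\<close>, the constraint in \<open>C\<close> whose root comes first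
  makes the walk leave the polyhedron; at that exit point it is newly active.\<close>
lemma line_exit_point:
  assumes a: "a \<in> P" and b: "b \<in> P" and u: "0 < u" "u < 1" and g: "g \<in> C" "g a < g b"
  shows "\<exists>s\<ge>1. affine_comb a b s \<in> P \<and> active (affine_comb a b u) \<subset> active (affine_comb a b s)"
proof -
  let ?L = "affine_comb a b"
  define U where "U = {h\<in>C. h a < h b}"
  define root where "root h = h a / (h a - h b)" for h :: "('v \<Rightarrow> real) \<Rightarrow> real"
  define s where "s = Min (root ` U)"
  have on_line: "h (?L t) = (h b - h a) * (t - root h)" if "h \<in> U" for h t
  proof -
    have "h (?L t) = h a + t * (h b - h a)"
      using that affine_fun_line[OF affine_C] by (simp add: U_def)
    also have "\<dots> = (h b - h a) * (t - root h)" using that by (simp add: U_def root_def field_simps)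
    finally show ?thesis .
  qed
  have "finite U" "g \<in> U" using finite_C g by (auto simp: U_def)
  then obtain h where h: "h \<in> U" "root h = s" and s_le: "\<And>h'. h' \<in> U \<Longrightarrow> s \<le> root h'"
    unfolding s_def by (metis (no_types, lifting) Min_in Min_le empty_iff finite_imageI image_iff)
  have "1 \<le> s"
    using h polyhedron_le[OF b] by (auto simp: U_def root_def le_divide_eq)
  have Ls: "?L s \<in> P"
  proof (rule line_forward_in_polyhedron[OF a b])
    show "0 \<le> s" using \<open>1 \<le> s\<close> by simp
    fix h' assume "h' \<in> C" "h' a < h' b"
    then have "h' \<in> U" by (simp add: U_def)
    then show "h' (?L s) \<le> 0"
      using on_line[of h' s] s_le[of h'] by (simp add: U_def mult_nonneg_nonpos)
  qed
  have "h (?L s) = 0" "h (?L u) \<noteq> 0"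
    using on_line[OF h(1)] h u \<open>1 \<le> s\<close> by (auto simp: U_def)
  then have "h \<in> active (?L s) - active (?L u)" using h by (auto simp: U_def active_def)
  moreover have "active (?L u) \<subseteq> active (?L s)"
    using active_affine_comb[OF a b u] active_inter_subset_line by blast
  ultimately have "active (?L u) \<subset> active (?L s)" by blast
  with \<open>1 \<le> s\<close> Ls show ?thesis by blast
qed

text \<open>Otherwise the walk from \<open>y\<close> through \<open>x\<close> could be continued inside the polyhedron
  beyond \<open>x\<close>, so \<open>x\<close> would not be extreme.\<close>
lemma extreme_point_eq_if_active_subset:
  assumes x: "fun_extreme_point_of x P" and y: "y \<in> P" and sub: "active x \<subseteq> active y"
  shows "y = x"
proof (rule ccontr)
  assume "y \<noteq> x"
  have xP: "x \<in> P" using x by (simp add: fun_extreme_point_of_def)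
  let ?L = "affine_comb y x"
  have "\<exists>s>1. ?L s \<in> P"
  proof (cases "\<exists>g\<in>C. g y < g x")
    case True
    then obtain g where g: "g \<in> C" "g y < g x" by blast
    obtain s where s: "1 \<le> s" "?L s \<in> P" "active (?L (1/2)) \<subset> active (?L s)"
      using line_exit_point[OF y xP _ _ g, of "1/2"] by auto
    have "active (?L (1/2)) = active x" using active_affine_comb[OF y xP] sub by auto
    then have "s \<noteq> 1" using s(3) by auto
    then show ?thesis using s by auto
  next
    case False
    have "?L 2 \<in> P" by (rule line_forward_in_polyhedron[OF y xP]) (use False in auto)
    then show ?thesis by (intro exI[of _ 2]) simp
  qed
  then obtain s where s: "1 < s" "?L s \<in> P" by blast
  have "x = affine_comb y (?L s) (1 / s)"
    using s by (intro ext) (simp add: affine_comb_def field_simps)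
  moreover have "y \<noteq> ?L s" using \<open>y \<noteq> x\<close> s affine_comb_eq_left_iff[of y x s] by auto
  moreover have "0 < 1 / s" "1 / s < 1" using s by auto
  ultimately show False using x y s(2) unfolding fun_extreme_point_of_iff by blast
qed

lemma finite_extreme_points: "finite {x. fun_extreme_point_of x P}"
proof -
  have "inj_on active {x. fun_extreme_point_of x P}"
    by (rule inj_onI)
      (metis extreme_point_eq_if_active_subset fun_extreme_point_of_def mem_Collect_eq order_refl)
  moreover have "active ` {x. fun_extreme_point_of x P} \<subseteq> Pow C" by (auto simp: active_def)
  ultimately show ?thesis using finite_C by (meson finite_Pow_iff finite_imageD finite_subset)
qed

context
  fixes f :: "('v \<Rightarrow> real) \<Rightarrow> real" and B :: real
  assumes concave: "concave_fun_on P f" and bounded: "\<And>x. x \<in> P \<Longrightarrow> B \<le> f x"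
begin

text \<open>If the line also leaves the polyhedron behind \<open>a\<close>, concavity on the resulting segment
  makes one of its two endpoints no worse; otherwise it stays inside behind \<open>a\<close>, and boundedness
  below makes the exit point ahead no worse.\<close>
lemma improving_point_on_line:
  assumes a: "a \<in> P" and b: "b \<in> P" and u: "0 < u" "u < 1" and g: "g \<in> C" "g a < g b"
  shows "\<exists>y\<in>P. f y \<le> f (affine_comb a b u) \<and> active (affine_comb a b u) \<subset> active y"
proof -
  let ?L = "affine_comb a b"
  obtain sh where sh: "1 \<le> sh" "?L sh \<in> P" "active (?L u) \<subset> active (?L sh)"
    using line_exit_point[OF a b u g] by blast
  show ?thesis
  proof (cases "\<exists>g\<in>C. g b < g a")
    case True
    then obtain g' where g': "g' \<in> C" "g' b < g' a" by blast
    obtain s' where s': "1 \<le> s'" "affine_comb b a s' \<in> P"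
        "active (affine_comb b a (1 - u)) \<subset> active (affine_comb b a s')"
      using line_exit_point[OF b a _ _ g', of "1 - u"] u by auto
    define sl where "sl = 1 - s'"
    have sl: "sl \<le> 0" "?L sl \<in> P" "active (?L u) \<subset> active (?L sl)"
      using s' affine_comb_swap[of b a "1 - s'"] affine_comb_swap[of b a u] by (auto simp: sl_def)
    have "concave_on {sl..sh} (\<lambda>s. f (?L s))"
      by (rule concave_on_line[OF concave]) (auto intro: line_segment_in_polyhedron[OF sl(2) sh(2)])
    then have "min (f (?L sl)) (f (?L sh)) \<le> f (?L u)"
      using sl sh u by (intro concave_on_ge_min) auto
    then show ?thesis using sl sh by (metis min_def)
  next
    case False
    then have ray: "?L s \<in> P" if "s \<le> sh" for s
      using line_ray_in_polyhedron[OF a b sh(2)] that by (auto simp: not_less)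
    have "concave_on {..sh} (\<lambda>s. f (?L s))"
      by (rule concave_on_line[OF concave]) (auto intro: ray)
    then have "f (?L sh) \<le> f (?L u)"
      by (rule concave_on_atMost_bounded_below_antimono) (use bounded ray u sh in auto)
    then show ?thesis using sh by blast
  qed
qed

lemma improving_point:
  assumes y: "y \<in> P" "\<not> fun_extreme_point_of y P"
  shows "\<exists>y'\<in>P. f y' \<le> f y \<and> active y \<subset> active y'"
proof -
  obtain a b u where ab: "a \<in> P" "b \<in> P" "a \<noteq> b" "0 < u" "u < 1"
    and y_eq: "y = affine_comb a b u"
    using y by (auto simp: fun_extreme_point_of_iff)
  obtain g where g: "g \<in> C" "g a \<noteq> g b" using pointed ab by blast
  show ?thesis
  proof (cases "g a < g b")
    case True
    then show ?thesis using improving_point_on_line[OF ab(1,2,4,5) g(1)] y_eq by blast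
  next
    case False
    then have "g b < g a" using g by auto
    moreover have "y = affine_comb b a (1 - u)" using y_eq by (simp add: affine_comb_swap)
    ultimately show ?thesis using improving_point_on_line[OF ab(2,1), of "1 - u" g] ab g by auto
  qed
qed

lemma exists_extreme_point_le:
  assumes "y \<in> P"
  shows "\<exists>x. fun_extreme_point_of x P \<and> f x \<le> f y"
  using assms
proof (induction "card (C - active y)" arbitrary: y rule: less_induct)
  case less
  show ?case
  proof (cases "fun_extreme_point_of y P")
    case False
    obtain y' where y': "y' \<in> P" "f y' \<le> f y" "active y \<subset> active y'"
      using improving_point[OF less.prems False] by blast
    have "card (C - active y') < card (C - active y)"
      using y'(3) finite_C by (intro psubset_card_mono) (auto simp: active_def)
    then obtain x where "fun_extreme_point_of x P" "f x \<le> f y'" using less.hyps y'(1) by blast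
    then show ?thesis using y'(2) by auto
  qed auto
qed

theorem concave_min_at_extreme_point:
  assumes "P \<noteq> {}"
  shows "\<exists>x. fun_extreme_point_of x P \<and> (\<forall>y\<in>P. f x \<le> f y)"
proof -
  define X where "X = {x. fun_extreme_point_of x P}"
  define x where "x = arg_min_on f X"
  have "X \<noteq> {}" using assms exists_extreme_point_le by (auto simp: X_def)
  then have x: "x \<in> X" "\<And>x'. x' \<in> X \<Longrightarrow> f x \<le> f x'"
    using arg_min_if_finite[OF finite_extreme_points[folded X_def], of f]
    by (auto simp: x_def not_less)
  have "f x \<le> f y" if "y \<in> P" for y
    using exists_extreme_point_le[OF that] x(2) by (force simp: X_def)
  then show ?thesis using x(1) by (auto simp: X_def)
qed

end

end

section \<open>Model (P)\<close>

definition equality_constraints :: "('w, 'z::finite, 'i::finite, 'j::finite, 'k::finite) rcmodel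
    \<Rightarrow> (('w, 'z, 'i, 'j, 'k) rcpoint \<Rightarrow> real) set" where
  "equality_constraints M = (\<lambda>v x. x v) ` {v. \<not> valid_var M v}
   \<union> {(\<lambda>x. (\<Sum>i\<in>UNIV. DNB M i k * dem M w z t i) - (x (XNMNB w z t k) + x (XINVNB w z t k))) | t w z k.
        t \<in> periods M \<and> w \<in> nodes M (stage M t) \<and> k \<in> KCP M}
   \<union> {(\<lambda>x. (\<Sum>i\<in>UNIV. DNB M i k * dem M w z t i) - x (XNMNB w z t k)) | t w z k.
        t \<in> periods M \<and> w \<in> nodes M (stage M t) \<and> k \<notin> KCP M}
   \<union> {(\<lambda>x. (\<Sum>k'\<in>KCP M. DCP M k' k * x (XCPINV w z t k')) - (x (XNMCP w z t k) + x (XMCCP w z t k))) | t w z k.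
        t \<in> periods M \<and> w \<in> nodes M (stage M t) \<and> k \<notin> KCP M}
   \<union> {(\<lambda>x. (\<Sum>k'\<in>- KCP M. DMC M k' k * x (XMCCP w z t k')) - x (XINVMC w z t k)) | t w z k.
        t \<in> periods M \<and> w \<in> nodes M (stage M t) \<and> k \<notin> KCP M}
   \<union> {(\<lambda>x. x (XRMINV w z t k) + x (XRMS w z t k)
           - (\<Sum>i\<in>UNIV. \<Sum>j\<in>UNIV. DREC M k i j * x (XRBRM w z t i j))) | t w z k.
        t \<in> periods M \<and> w \<in> nodes M (stage M t)}
   \<union> {(\<lambda>x. x (XRB w z t i) - (prevRB M x w z t i
              + (\<Sum>z'\<in>- {z}. x (XTRRB w z' z t i) - x (XTRRB w z z' t i))
              + supp M w z t i - (\<Sum>j\<in>UNIV. x (XRBRM w z t i j)))) | t w z i.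
        t \<in> periods M \<and> w \<in> nodes M (stage M t)}
   \<union> {(\<lambda>x. x (XINV w z t k) - (prevINV M x w z t k
              + (\<Sum>z'\<in>- {z}. x (XTRRM w z' z t k) - x (XTRRM w z z' t k))
              + x (XRMINV w z t k) - x (XINVMC w z t k))) | t w z k.
        t \<in> periods M \<and> w \<in> nodes M (stage M t) \<and> k \<notin> KCP M}
   \<union> {(\<lambda>x. x (XINV w z t k) - (prevINV M x w z t k
              + (\<Sum>z'\<in>- {z}. x (XTRRM w z' z t k) - x (XTRRM w z z' t k))
              + x (XRMINV w z t k) + x (XCPINV w z t k) - x (XINVNB w z t k))) | t w z k.
        t \<in> periods M \<and> w \<in> nodes M (stage M t) \<and> k \<in> KCP M}"

definition inequality_constraints :: "('w, 'z::finite, 'i::finite, 'j::finite, 'k::finite) rcmodel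
    \<Rightarrow> (('w, 'z, 'i, 'j, 'k) rcpoint \<Rightarrow> real) set" where
  "inequality_constraints M = (\<lambda>v x. - x v) ` {v. valid_var M v}
   \<union> {(\<lambda>x. (\<Sum>i\<in>UNIV. x (XRBRM w z t i j)) - capREC M x z (lper M t) j) | t w z j.
        t \<in> periods M \<and> w \<in> nodes M (stage M t)}
   \<union> {(\<lambda>x. x (XCPINV w z t k) - capCP M x z (lper M t) k) | t w z k.
        t \<in> periods M \<and> w \<in> nodes M (stage M t) \<and> k \<in> KCP M}
   \<union> {(\<lambda>x. capREC M x z l j - capREC M x z l' j) | z l l' j. l \<in> Lset M \<and> l' \<in> Lset M \<and> l \<le> l'}
   \<union> {(\<lambda>x. capCP M x z l k - capCP M x z l' k) | z l l' k.
        l \<in> Lset M \<and> l' \<in> Lset M \<and> l \<le> l' \<and> k \<in> KCP M}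
   \<union> {(\<lambda>x. x (YREC z l j n) - uREC M) | z l j n. l \<in> Lset M \<and> n \<in> NREC M l}
   \<union> {(\<lambda>x. x (YCP z l k n) - uCP M) | z l k n. l \<in> Lset M \<and> k \<in> KCP M \<and> n \<in> NCP M l k}"

text \<open>The capacity variables outside the index set of (P) vanish, so their upper bounds,
  which \<open>feasible\<close> imposes for all indices, follow from \<open>0 \<le> uREC M\<close> and \<open>0 \<le> uCP M\<close>.\<close>
lemma feasible_iff_polyhedron:
  assumes "0 \<le> uREC M" "0 \<le> uCP M"
  shows "feasible M x \<longleftrightarrow> x \<in> fun_polyhedron (equality_constraints M) (inequality_constraints M)"
  unfolding feasible_def fun_polyhedron_def equality_constraints_def inequality_constraints_def
  using assms
  by (simp add: ball_Un imp_ex imp_conjL)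
     (auto, metis valid_var.simps(14), metis valid_var.simps(15))

lemma feasible_nonneg: "feasible M x \<Longrightarrow> 0 \<le> x v"
  by (cases "valid_var M v") (simp_all add: feasible_def)

lemma affine_equality_constraints: "g \<in> equality_constraints M \<Longrightarrow> affine_fun g"
  unfolding equality_constraints_def prevRB_def prevINV_def by (auto intro!: affine_fun_intros)

lemma affine_inequality_constraints: "g \<in> inequality_constraints M \<Longrightarrow> affine_fun g"
  unfolding inequality_constraints_def capREC_def capCP_def by (auto intro!: affine_fun_intros)

lemma finite_image_set4:
  assumes "finite {(a, b, c, d). P a b c d}"
  shows "finite {f a b c d | a b c d. P a b c d}"
proof -
  have "{f a b c d | a b c d. P a b c d} = (\<lambda>(a, b, c, d). f a b c d) ` {(a, b, c, d). P a b c d}"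
    by force
  then show ?thesis using assms by simp
qed

lemma finite_periods [simp]: "finite (periods M)"
  by (simp add: periods_def)

lemma finite_valid_vars:
  fixes M :: "('w, 'z::finite, 'i::finite, 'j::finite, 'k::finite) rcmodel"
  assumes "\<forall>t\<in>periods M. finite (nodes M (stage M t))" and "finite (Lset M)"
    and "\<forall>l\<in>Lset M. finite (NREC M l)" and "\<forall>l\<in>Lset M. \<forall>k\<in>KCP M. finite (NCP M l k)"
  shows "finite {v. valid_var M v}"
proof -
  define X :: "('w, 'z, 'i, 'j, 'k) rcvar set" where
    "X = (\<Union>t\<in>periods M. \<Union>w\<in>nodes M (stage M t). \<Union>z. \<Union>z'. \<Union>k. \<Union>i. \<Union>j.
     {XNMNB w z t k, XINVNB w z t k, XCPINV w z t k, XNMCP w z t k, XMCCP w z t k, XINVMC w z t k,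
      XRMINV w z t k, XRMS w z t k, XINV w z t k, XRB w z t i, XRBRM w z t i j, XTRRB w z z' t i,
      XTRRM w z z' t k})"
  define Y :: "('w, 'z, 'i, 'j, 'k) rcvar set" where
    "Y = (\<Union>l\<in>Lset M. (\<Union>n\<in>NREC M l. \<Union>z. \<Union>j. {YREC z l j n})
                   \<union> (\<Union>k\<in>KCP M. \<Union>n\<in>NCP M l k. \<Union>z. {YCP z l k n}))"
  have "finite X" "finite Y" using assms by (auto simp: X_def Y_def)
  moreover have "{v. valid_var M v} \<subseteq> X \<union> Y"
  proof
    fix v assume "v \<in> {v. valid_var M v}"
    then show "v \<in> X \<union> Y" by (cases v) (auto simp: node_ok_def X_def Y_def)
  qed
  ultimately show ?thesis by (meson finite_UnI finite_subset)
qed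

lemma finite_inequality_constraints:
  fixes M :: "('w, 'z::finite, 'i::finite, 'j::finite, 'k::finite) rcmodel"
  assumes "\<forall>t\<in>periods M. finite (nodes M (stage M t))" and fin_L: "finite (Lset M)"
    and fin_NREC: "\<forall>l\<in>Lset M. finite (NREC M l)"
    and fin_NCP: "\<forall>l\<in>Lset M. \<forall>k\<in>KCP M. finite (NCP M l k)"
  shows "finite (inequality_constraints M)"
proof -
  have nodes: "finite (SIGMA t:periods M. nodes M (stage M t) \<times> (UNIV :: ('z \<times> 'j) set))"
    "finite (SIGMA t:periods M. nodes M (stage M t) \<times> (UNIV :: ('z \<times> 'k) set))"
    using assms(1) by auto
  show ?thesis
    unfolding inequality_constraints_def
    apply (intro finite_UnI finite_imageI finite_valid_vars[OF assms] finite_image_set4)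
    subgoal by (rule finite_subset[OF _ nodes(1)]) auto
    subgoal by (rule finite_subset[OF _ nodes(2)]) auto
    subgoal by (rule finite_subset[of _ "UNIV \<times> Lset M \<times> Lset M \<times> UNIV"]) (auto simp: fin_L)
    subgoal by (rule finite_subset[of _ "UNIV \<times> Lset M \<times> Lset M \<times> UNIV"]) (auto simp: fin_L)
    subgoal by (rule finite_subset[of _ "UNIV \<times> (SIGMA l:Lset M. UNIV \<times> NREC M l)"])
        (auto simp: fin_L fin_NREC)
    subgoal by (rule finite_subset[of _ "UNIV \<times> (SIGMA l:Lset M. SIGMA k:KCP M. NCP M l k)"])
        (auto simp: fin_L fin_NCP)
    done
qed

lemma concave_on_powr:
  assumes r: "0 < r" "r \<le> 1"
  shows "concave_on {0..} (\<lambda>x::real. x powr r)"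
proof (rule concave_on_linorderI)
  have pos: "concave_on {0<..} (\<lambda>x::real. x powr r)"
  proof (rule f''_le0_imp_concave[where f' = "\<lambda>x. r * x powr (r - 1)"
        and f'' = "\<lambda>x. r * ((r - 1) * x powr (r - 1 - 1))"])
    fix x :: real assume x: "x \<in> {0<..}"
    then show "((\<lambda>x. x powr r) has_real_derivative r * x powr (r - 1)) (at x)"
      by (intro has_real_derivative_powr) auto
    show "((\<lambda>x. r * x powr (r - 1)) has_real_derivative r * ((r - 1) * x powr (r - 1 - 1))) (at x)"
      using x by (intro DERIV_cmult has_real_derivative_powr) auto
    show "r * ((r - 1) * x powr (r - 1 - 1)) \<le> 0"
      using r by (intro mult_nonneg_nonpos mult_nonpos_nonneg) auto
  qed simp
  fix t x y :: real assume t: "0 < t" "t < 1" and xy: "x \<in> {0..}" "y \<in> {0..}" "x < y"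
  show "(1 - t) * x powr r + t * y powr r \<le> ((1 - t) *\<^sub>R x + t *\<^sub>R y) powr r"
  proof (cases "x = 0")
    case True
    have "t * y powr r \<le> t powr r * y powr r"
      using powr_mono'[of r 1 t] t r by (intro mult_right_mono) auto
    then show ?thesis using True t xy by (simp add: powr_mult)
  next
    case False
    then show ?thesis using concave_onD[OF pos, of t x y] t xy by simp
  qed
qed simp

lemma capcost_nonneg: "(\<forall>i. 0 \<le> q i) \<Longrightarrow> 0 \<le> w \<Longrightarrow> 0 \<le> capcost q r m w y"
  by (auto simp: capcost_def intro!: add_nonneg_nonneg sum_nonneg)

text \<open>The fixed cost \<open>w\<close> is a jump at \<open>0\<close> upwards, which preserves concavity on \<open>[0, \<infinity>)\<close>.\<close>
lemma concave_on_capcost: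
  assumes form: "\<forall>i. 0 < r i \<and> r i \<le> 1 \<and> 0 \<le> q i" and w: "0 \<le> w"
  shows "concave_on {0..} (capcost q r m w)"
proof (rule concave_on_linorderI)
  fix t x y :: real assume t: "0 < t" "t < 1" and xy: "x \<in> {0..}" "y \<in> {0..}" "x < y"
  define z where "z = (1 - t) * x + t * y"
  have "0 < z" using t xy by (simp add: z_def add_nonneg_pos)
  let ?g = "\<lambda>y. \<Sum>i<m. q i * y powr r i"
  have "capcost q r m w x \<le> ?g x + w" using form xy w by (auto simp: capcost_def intro!: sum_nonneg)
  moreover have "capcost q r m w y = ?g y + w" using xy by (simp add: capcost_def)
  ultimately have "(1 - t) * capcost q r m w x + t * capcost q r m w y
      \<le> (1 - t) * (?g x + w) + t * (?g y + w)"
    using t by (intro add_mono mult_left_mono) auto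
  also have "\<dots> = ((1 - t) * ?g x + t * ?g y) + w"
    by (simp add: algebra_simps)
  also have "\<dots> = (\<Sum>i<m. q i * ((1 - t) * x powr r i + t * y powr r i)) + w"
    by (simp add: sum_distrib_left sum.distrib mult.left_commute distrib_left)
  also have "\<dots> \<le> ?g z + w"
    using concave_onD[OF concave_on_powr] form t xy
    by (intro add_mono sum_mono mult_left_mono) (auto simp: z_def)
  also have "\<dots> = capcost q r m w z" using \<open>0 < z\<close> by (simp add: capcost_def)
  finally show "(1 - t) * capcost q r m w x + t * capcost q r m w y
      \<le> capcost q r m w ((1 - t) *\<^sub>R x + t *\<^sub>R y)" by (simp add: z_def)
qed simp

lemma concave_fun_on_coordinate:
  assumes "concave_on I \<phi>" and "\<And>x. x \<in> S \<Longrightarrow> x v \<in> I"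
  shows "concave_fun_on S (\<lambda>x. \<phi> (x v))"
  unfolding concave_fun_on_def
proof (intro ballI allI impI)
  fix a b u assume "a \<in> S" "b \<in> S" "0 \<le> u" "u \<le> (1::real)"
  then show "(1 - u) * \<phi> (a v) + u * \<phi> (b v) \<le> \<phi> (affine_comb a b u v)"
    using concave_onD[OF assms(1), of u "a v" "b v"] assms(2) by (simp add: affine_comb_def)
qed

definition recovery_bound :: "('w, 'z, 'i::finite, 'j::finite, 'k) rcmodel \<Rightarrow> nat \<Rightarrow> 'k \<Rightarrow> real" where
  "recovery_bound M t k =
     (\<Sum>i\<in>UNIV. \<Sum>j\<in>UNIV. DREC M k i j) * (real (card (NREC M (lper M t))) * uREC M)"

primrec cum_supply :: "('w, 'z, 'i, 'j, 'k) rcmodel \<Rightarrow> 'w \<Rightarrow> 'z \<Rightarrow> 'i \<Rightarrow> nat \<Rightarrow> real" where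
  "cum_supply M w z i 0 = 0"
| "cum_supply M w z i (Suc t) = cum_supply M (anc M w t) z i t + supp M w z (Suc t) i"

fun idle_plan_value :: "('w, 'z, 'i::finite, 'j, 'k) rcmodel \<Rightarrow> ('w, 'z, 'i, 'j, 'k) rcpoint" where
  "idle_plan_value M (XNMNB w z t k) = (\<Sum>i\<in>UNIV. DNB M i k * dem M w z t i)"
| "idle_plan_value M (XRB w z t i) = cum_supply M w z i t"
| "idle_plan_value M _ = 0"

definition idle_plan :: "('w, 'z, 'i::finite, 'j, 'k) rcmodel \<Rightarrow> ('w, 'z, 'i, 'j, 'k) rcpoint" where
  "idle_plan M v = (if valid_var M v then idle_plan_value M v else 0)"

locale recycling_model =
  fixes M :: "('w, 'z::finite, 'i::finite, 'j::finite, 'k::finite) rcmodel"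
  assumes fin_nodes: "\<forall>t\<in>periods M. finite (nodes M (stage M t))"
    and tree: "\<forall>t\<in>periods M. 2 \<le> t \<longrightarrow>
                 (\<forall>w\<in>nodes M (stage M t). anc M w (t - 1) \<in> nodes M (stage M (t - 1)))"
    and fin_L: "finite (Lset M)"
    and fin_NREC: "\<forall>l\<in>Lset M. finite (NREC M l)"
    and fin_NCP: "\<forall>l\<in>Lset M. \<forall>k\<in>KCP M. finite (NCP M l k)"
    and d_nn: "\<forall>w z t i. 0 \<le> dem M w z t i"
    and s_nn: "\<forall>w z t i. 0 \<le> supp M w z t i"
    and DNB_nn: "\<forall>i k. 0 \<le> DNB M i k"
    and DREC_nn: "\<forall>k i j. 0 \<le> DREC M k i j"
    and cNBNM_nn: "\<forall>w t k. 0 \<le> cNBNM M w t k"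
    and cCPNM_nn: "\<forall>w t k. 0 \<le> cCPNM M w t k"
    and cMC_nn: "\<forall>w z t k. 0 \<le> cMC M w z t k"
    and cCP_nn: "\<forall>w z t k. 0 \<le> cCP M w z t k"
    and cREC_nn: "\<forall>w z t i j. 0 \<le> cREC M w z t i j"
    and cTRRM_nn: "\<forall>z z'. 0 \<le> cTRRM M z z'"
    and cTRRB_nn: "\<forall>z z'. 0 \<le> cTRRB M z z'"
    and v_nn: "\<forall>w t k. 0 \<le> val M w t k"
    and p_nn: "\<forall>w. 0 \<le> prob M w"
    and rho_nn: "0 \<le> rho M"
    and eta_nn: "0 \<le> eta M"
    and gamma_le: "gamma M \<le> 1"
    and uREC_nn: "0 \<le> uREC M"
    and uCP_nn: "0 \<le> uCP M"
    and fREC_form: "\<forall>z j i. 0 < rREC M z j i \<and> rREC M z j i \<le> 1 \<and> 0 \<le> qREC M z j i"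
                   "\<forall>z j. 0 \<le> wREC M z j"
    and fCP_form: "\<forall>z k i. 0 < rCP M z k i \<and> rCP M z k i \<le> 1 \<and> 0 \<le> qCP M z k i"
                  "\<forall>z k. 0 \<le> wCP M z k"
begin

lemma feasible_region_eq_polyhedron:
  "feasible_region M = fun_polyhedron (equality_constraints M) (inequality_constraints M)"
  using feasible_iff_polyhedron[OF uREC_nn uCP_nn] by (auto simp: feasible_region_def)

lemma pointed_polyhedron_feasible_region:
  "pointed_polyhedron (equality_constraints M) (inequality_constraints M)"
proof (unfold_locales)
  show "finite (inequality_constraints M)"
    by (rule finite_inequality_constraints[OF fin_nodes fin_L fin_NREC fin_NCP])
  show "affine_fun g" if "g \<in> equality_constraints M" for g
    using that by (rule affine_equality_constraints)
  show "affine_fun g" if "g \<in> inequality_constraints M" for g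
    using that by (rule affine_inequality_constraints)
  show "\<exists>g\<in>inequality_constraints M. g a \<noteq> g b"
    if "a \<in> fun_polyhedron (equality_constraints M) (inequality_constraints M)"
      and "b \<in> fun_polyhedron (equality_constraints M) (inequality_constraints M)"
      and "a \<noteq> b" for a b
  proof -
    obtain v where v: "a v \<noteq> b v" using \<open>a \<noteq> b\<close> by auto
    have "feasible M a" "feasible M b"
      using that by (simp_all add: feasible_iff_polyhedron[OF uREC_nn uCP_nn])
    have "valid_var M v"
    proof (rule ccontr)
      assume "\<not> valid_var M v"
      with \<open>feasible M a\<close> \<open>feasible M b\<close> have "a v = 0" "b v = 0" by (simp_all add: feasible_def)
      with v show False by simp
    qed
    then have "(\<lambda>x. - x v) \<in> inequality_constraints M" by (auto simp: inequality_constraints_def)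
    with v show ?thesis by (intro bexI[of _ "\<lambda>x. - x v"]) simp_all
  qed
qed

lemma concave_objective: "concave_fun_on (feasible_region M) (objective M)"
proof -
  have nonneg: "\<And>x. x \<in> feasible_region M \<Longrightarrow> x v \<in> {0..}" for v
    by (simp add: feasible_region_def feasible_nonneg)
  have CPL: "concave_fun_on (feasible_region M) (\<lambda>x. CPL M x t)" for t
    unfolding CPL_def fREC_def fCP_def
    by (intro concave_fun_on_sum concave_fun_on_add concave_fun_on_coordinate[OF concave_on_capcost]
          nonneg) (simp_all add: fREC_form fCP_form)
  have COP: "concave_fun_on (feasible_region M)
      (\<lambda>x. \<Sum>w\<in>nodes M (stage M t). prob M w * COP M x w t)" for t
    unfolding COP_def by (intro concave_fun_on_affine affine_fun_intros)
  show ?thesis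
    unfolding objective_def
  proof (rule concave_fun_on_sum, rule concave_fun_on_cmult)
    show "0 \<le> (1 - gamma M) ^ (t - 1)" for t using gamma_le by simp
    show "concave_fun_on (feasible_region M)
        (\<lambda>x. CPL M x t + (\<Sum>w\<in>nodes M (stage M t). prob M w * COP M x w t))" for t
      by (rule concave_fun_on_add[OF CPL COP])
  qed
qed

lemma sold_material_le_recovery_bound:
  assumes x: "feasible M x" and t: "t \<in> periods M" and w: "w \<in> nodes M (stage M t)"
  shows "x (XRMS w z t k) \<le> recovery_bound M t k"
proof -
  let ?cap = "real (card (NREC M (lper M t))) * uREC M"
  have "x (XRBRM w z t i j) \<le> ?cap" for i j
  proof -
    have "x (XRBRM w z t i j) \<le> (\<Sum>i'\<in>UNIV. x (XRBRM w z t i' j))"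
      using x by (intro member_le_sum) (auto simp: feasible_nonneg)
    also have "\<dots> \<le> capREC M x z (lper M t) j" using x t w by (simp add: feasible_def)
    also have "\<dots> \<le> (\<Sum>n\<in>NREC M (lper M t). uREC M)"
      unfolding capREC_def using x by (intro sum_mono) (simp add: feasible_def)
    finally show ?thesis by simp
  qed
  then have "(\<Sum>i\<in>UNIV. \<Sum>j\<in>UNIV. DREC M k i j * x (XRBRM w z t i j))
      \<le> (\<Sum>i\<in>UNIV. \<Sum>j\<in>UNIV. DREC M k i j * ?cap)"
    using DREC_nn by (intro sum_mono mult_left_mono) auto
  moreover have "x (XRMS w z t k) \<le> x (XRMINV w z t k) + x (XRMS w z t k)"
    using x by (simp add: feasible_nonneg)
  moreover have "x (XRMINV w z t k) + x (XRMS w z t k)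
      = (\<Sum>i\<in>UNIV. \<Sum>j\<in>UNIV. DREC M k i j * x (XRBRM w z t i j))"
    using x t w by (simp add: feasible_def)
  ultimately show ?thesis by (simp add: recovery_bound_def sum_distrib_right)
qed

text \<open>Sales revenue is the only negative term of the operational cost.\<close>
lemma operational_cost_lower_bound:
  assumes x: "feasible M x" and t: "t \<in> periods M" and w: "w \<in> nodes M (stage M t)"
  shows "(\<Sum>z\<in>(UNIV :: 'z set). \<Sum>k\<in>UNIV. - (val M w t k * eta M * recovery_bound M t k))
    \<le> COP M x w t"
  unfolding COP_def
proof (rule sum_mono)
  fix z
  have "- (eta M * recovery_bound M t k)
      \<le> rho M * x (XINV w z t k) - eta M * x (XRMS w z t k)" for k
  proof -
    have "eta M * x (XRMS w z t k) \<le> eta M * recovery_bound M t k"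
      using sold_material_le_recovery_bound[OF x t w] eta_nn by (rule mult_left_mono)
    moreover have "0 \<le> rho M * x (XINV w z t k)" using rho_nn feasible_nonneg[OF x] by simp
    ultimately show ?thesis by linarith
  qed
  then have "val M w t k * - (eta M * recovery_bound M t k)
      \<le> val M w t k * (rho M * x (XINV w z t k) - eta M * x (XRMS w z t k))" for k
    using v_nn by (intro mult_left_mono) auto
  then have "(\<Sum>k\<in>UNIV. - (val M w t k * eta M * recovery_bound M t k))
      \<le> (\<Sum>k\<in>UNIV. val M w t k * (rho M * x (XINV w z t k) - eta M * x (XRMS w z t k)))"
    by (intro sum_mono) (simp add: mult.assoc)
  moreover have "0 \<le> (\<Sum>k\<in>UNIV. cNBNM M w t k * x (XNMNB w z t k))
      + (\<Sum>k\<in>- KCP M. cCPNM M w t k * x (XNMCP w z t k) + cMC M w z t k * x (XMCCP w z t k))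
      + (\<Sum>k\<in>KCP M. cCP M w z t k * x (XCPINV w z t k))
      + (\<Sum>i\<in>UNIV. \<Sum>j\<in>UNIV. cREC M w z t i j * x (XRBRM w z t i j))
      + (\<Sum>z'\<in>- {z}. (\<Sum>k\<in>UNIV. cTRRM M z z' * x (XTRRM w z z' t k))
                    + (\<Sum>i\<in>UNIV. cTRRB M z z' * x (XTRRB w z z' t i)))"
    using cNBNM_nn cCPNM_nn cMC_nn cCP_nn cREC_nn cTRRM_nn cTRRB_nn feasible_nonneg[OF x]
    by (intro add_nonneg_nonneg sum_nonneg mult_nonneg_nonneg) auto
  ultimately show "(\<Sum>k\<in>UNIV. - (val M w t k * eta M * recovery_bound M t k))
      \<le> (\<Sum>k\<in>UNIV. cNBNM M w t k * x (XNMNB w z t k))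
       + (\<Sum>k\<in>- KCP M. cCPNM M w t k * x (XNMCP w z t k) + cMC M w z t k * x (XMCCP w z t k))
       + (\<Sum>k\<in>UNIV. val M w t k * (rho M * x (XINV w z t k) - eta M * x (XRMS w z t k)))
       + (\<Sum>k\<in>KCP M. cCP M w z t k * x (XCPINV w z t k))
       + (\<Sum>i\<in>UNIV. \<Sum>j\<in>UNIV. cREC M w z t i j * x (XRBRM w z t i j))
       + (\<Sum>z'\<in>- {z}. (\<Sum>k\<in>UNIV. cTRRM M z z' * x (XTRRM w z z' t k))
                      + (\<Sum>i\<in>UNIV. cTRRB M z z' * x (XTRRB w z z' t i)))"
    by linarith
qed

lemma objective_bounded_below:
  obtains B where "\<And>x. x \<in> feasible_region M \<Longrightarrow> B \<le> objective M x"
proof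
  fix x assume "x \<in> feasible_region M"
  then have x: "feasible M x" by (simp add: feasible_region_def)
  show "(\<Sum>t\<in>periods M. (1 - gamma M) ^ (t - 1) * (\<Sum>w\<in>nodes M (stage M t). prob M w *
          (\<Sum>z\<in>(UNIV :: 'z set). \<Sum>k\<in>UNIV. - (val M w t k * eta M * recovery_bound M t k))))
        \<le> objective M x"
    unfolding objective_def
  proof (intro sum_mono mult_left_mono)
    fix t assume t: "t \<in> periods M"
    have "0 \<le> CPL M x t"
      unfolding CPL_def fREC_def fCP_def
      by (intro sum_nonneg add_nonneg_nonneg capcost_nonneg) (simp_all add: fREC_form fCP_form)
    moreover have "(\<Sum>w\<in>nodes M (stage M t). prob M w *
          (\<Sum>z\<in>(UNIV :: 'z set). \<Sum>k\<in>UNIV. - (val M w t k * eta M * recovery_bound M t k)))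
        \<le> (\<Sum>w\<in>nodes M (stage M t). prob M w * COP M x w t)"
      using operational_cost_lower_bound[OF x t] p_nn by (intro sum_mono mult_left_mono) auto
    ultimately show "(\<Sum>w\<in>nodes M (stage M t). prob M w *
          (\<Sum>z\<in>(UNIV :: 'z set). \<Sum>k\<in>UNIV. - (val M w t k * eta M * recovery_bound M t k)))
        \<le> CPL M x t + (\<Sum>w\<in>nodes M (stage M t). prob M w * COP M x w t)"
      by linarith
    show "0 \<le> (1 - gamma M) ^ (t - 1)" using gamma_le by simp
  qed
qed

lemma feasible_idle_plan: "feasible M (idle_plan M)"
proof -
  have cum_supply_nonneg: "0 \<le> cum_supply M w z i t" for w z i t
    using s_nn by (induction t arbitrary: w) auto
  have nonneg: "0 \<le> idle_plan_value M v" for v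
    by (cases v) (auto simp: cum_supply_nonneg d_nn DNB_nn intro!: sum_nonneg mult_nonneg_nonneg)
  have inventory: "idle_plan M (XRB w z t i) = prevRB M (idle_plan M) w z t i + supp M w z t i"
    if t: "t \<in> periods M" and w: "w \<in> nodes M (stage M t)" for w z t i
  proof (cases "t = 1")
    case False
    then have "2 \<le> t" using t by (auto simp: periods_def)
    then have "t - 1 \<in> periods M" "anc M w (t - 1) \<in> nodes M (stage M (t - 1))"
      using tree t w by (auto simp: periods_def)
    moreover obtain t' where "t = Suc t'" using \<open>2 \<le> t\<close> by (cases t) auto
    ultimately show ?thesis using t w False by (simp add: idle_plan_def prevRB_def node_ok_def)
  qed (use t w in \<open>simp add: idle_plan_def prevRB_def node_ok_def\<close>)
  show ?thesis
    unfolding feasible_def using nonneg inventory uREC_nn uCP_nn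
    by (auto simp: idle_plan_def node_ok_def capREC_def capCP_def prevINV_def cong: if_cong)
qed

theorem optimal_extreme_point:
  "feasible_region M \<noteq> {} \<and>
   (\<exists>x. fun_extreme_point_of x (feasible_region M) \<and>
        (\<forall>x'\<in>feasible_region M. objective M x \<le> objective M x'))"
proof -
  interpret pointed_polyhedron "equality_constraints M" "inequality_constraints M"
    by (rule pointed_polyhedron_feasible_region)
  obtain B where "\<And>x. x \<in> feasible_region M \<Longrightarrow> B \<le> objective M x"
    using objective_bounded_below by blast
  moreover have "feasible_region M \<noteq> {}"
    using feasible_idle_plan by (auto simp: feasible_region_def)
  ultimately show ?thesis
    using concave_min_at_extreme_point[of "objective M" B] concave_objective
    unfolding feasible_region_eq_polyhedron by blast
qed

end

theorem proposition2:
  fixes M :: "('w, 'z::finite, 'i::finite, 'j::finite, 'k::finite) rcmodel"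
  assumes fin_nodes: "\<forall>t\<in>periods M. finite (nodes M (stage M t))"
    and tree: "\<forall>t\<in>periods M. 2 \<le> t \<longrightarrow>
                 (\<forall>w\<in>nodes M (stage M t). anc M w (t - 1) \<in> nodes M (stage M (t - 1)))"
    and fin_L: "finite (Lset M)"
    and lper_in: "\<forall>t\<in>periods M. lper M t \<in> Lset M"
    and fin_NREC: "\<forall>l\<in>Lset M. finite (NREC M l)"
    and fin_NCP: "\<forall>l\<in>Lset M. \<forall>k\<in>KCP M. finite (NCP M l k)"
    and d_nn: "\<forall>w z t i. 0 \<le> dem M w z t i"
    and s_nn: "\<forall>w z t i. 0 \<le> supp M w z t i"
    and DNB_nn: "\<forall>i k. 0 \<le> DNB M i k"
    and DCP_nn: "\<forall>k' k. 0 \<le> DCP M k' k"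
    and DMC_nn: "\<forall>k' k. 0 \<le> DMC M k' k"
    and DREC_nn: "\<forall>k i j. 0 \<le> DREC M k i j"
    and cNBNM_nn: "\<forall>w t k. 0 \<le> cNBNM M w t k"
    and cCPNM_nn: "\<forall>w t k. 0 \<le> cCPNM M w t k"
    and cMC_nn: "\<forall>w z t k. 0 \<le> cMC M w z t k"
    and cCP_nn: "\<forall>w z t k. 0 \<le> cCP M w z t k"
    and cREC_nn: "\<forall>w z t i j. 0 \<le> cREC M w z t i j"
    and cTRRM_nn: "\<forall>z z'. 0 \<le> cTRRM M z z'"
    and cTRRB_nn: "\<forall>z z'. 0 \<le> cTRRB M z z'"
    and v_nn: "\<forall>w t k. 0 \<le> val M w t k"
    and p_nn: "\<forall>w. 0 \<le> prob M w"
    and rho: "0 \<le> rho M" "rho M \<le> 1"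
    and eta: "0 \<le> eta M" "eta M \<le> 1"
    and gamma: "0 \<le> gamma M" "gamma M < 1"
    and u_pos: "0 < uREC M" "0 < uCP M"
    and fREC_form: "\<forall>z j i. 0 < rREC M z j i \<and> rREC M z j i \<le> 1 \<and> 0 \<le> qREC M z j i"
                   "\<forall>z j. 0 \<le> wREC M z j"
    and fCP_form: "\<forall>z k i. 0 < rCP M z k i \<and> rCP M z k i \<le> 1 \<and> 0 \<le> qCP M z k i"
                  "\<forall>z k. 0 \<le> wCP M z k"
  shows "feasible_region M \<noteq> {} \<and>
         (\<exists>x. fun_extreme_point_of x (feasible_region M) \<and>
              (\<forall>x'\<in>feasible_region M. objective M x \<le> objective M x'))"
proof -
  interpret recycling_model M
    by unfold_locales (use assms in \<open>auto simp: less_imp_le\<close>)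
  show ?thesis by (rule optimal_extreme_point)
qed

end
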